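(* Consider equation (E) and assume each $\tau_i$ is non-decreasing. If $$\limsup_{t\to+\infty}\prod_{j=1}^{m}\bigg(\prod_{i=1}^{m}\int_{\tau_j(t)}^{t}p_i(s)\,ds\bigg)^{1/m}>\frac{1}{m^{m}},$$ then all solutions of (E) oscillate.
   Context: Equation (E) is $x'(t)+\sum_{i=1}^{m}p_i(t)\,x(\tau_i(t))=0$, $t\ge t_0$, where $m\ge1$ is an integer and, for each $i$, $p_i,\tau_i:[t_0,\infty)\to[0,\infty)$ are continuous, $\tau_i(t)\le t$ for $t\ge t_0$, and $\lim_{t\to\infty}\tau_i(t)=\infty$. Let $\tau(t)=\min_i\tau_i(t)$ and $\tau_{(-1)}(t)=\sup\{s:\tau(s)\le t\}$. A solution of (E) is a function $x\in C([T_0,\infty);\mathbb{R})$ for some $T_0\ge t_0$ which is continuously differentiable on $[\tau_{(-1)}(T_0),\infty)$ and satisfies (E) for $t\ge\tau_{(-1)}(T_0)$. A solution is oscillatory if it has arbitrarily large zeros; "all solutions oscillate" means every solution is oscillatory. *)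

theory Defs
  imports "HOL-Analysis.Analysis"
begin

text \<open>Equation (E):  x'(t) + sum_{i=1}^m p_i(t) x(tau_i(t)) = 0, t >= t0.
  Coefficients and delays are indexed by i in {1..m}.\<close>

definition min_delay :: "nat \<Rightarrow> (nat \<Rightarrow> real \<Rightarrow> real) \<Rightarrow> real \<Rightarrow> real" where
  "min_delay m \<tau> t = Min ((\<lambda>i. \<tau> i t) ` {1..m})"

definition delay_inv :: "real \<Rightarrow> nat \<Rightarrow> (nat \<Rightarrow> real \<Rightarrow> real) \<Rightarrow> real \<Rightarrow> real" where
  "delay_inv t0 m \<tau> T = Sup {s. s \<ge> t0 \<and> min_delay m \<tau> s \<le> T}"

definition is_solution ::
  "real \<Rightarrow> nat \<Rightarrow> (nat \<Rightarrow> real \<Rightarrow> real) \<Rightarrow> (nat \<Rightarrow> real \<Rightarrow> real) \<Rightarrow> (real \<Rightarrow> real) \<Rightarrow> bool" where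
  "is_solution t0 m p \<tau> x \<longleftrightarrow>
     (\<exists>T0 x'. T0 \<ge> t0 \<and> continuous_on {T0..} x \<and>
        continuous_on {delay_inv t0 m \<tau> T0..} x' \<and>
        (\<forall>t \<ge> delay_inv t0 m \<tau> T0.
            (x has_real_derivative x' t) (at t within {delay_inv t0 m \<tau> T0..}) \<and>
            x' t + (\<Sum>i\<in>{1..m}. p i t * x (\<tau> i t)) = 0))"

definition oscillatory :: "(real \<Rightarrow> real) \<Rightarrow> bool" where
  "oscillatory x \<longleftrightarrow> (\<forall>T. \<exists>t \<ge> T. x t = 0)"

end

theory Submission
  imports Defs
begin

text \<open>Suppose (E) had an eventually positive solution x (the negative case reduces to
  this one via -x). Eventually x' \<le> 0, so x is nonincreasing, and integrating (E) over
  [tau_j(t), t] with the monotonicity of the tau_i yields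
  sum_i (integral of p_i over [tau_j(t), t]) * x(tau_i(t)) \<le> x(tau_j(t)) for every j.
  Multiplying the AM-GM bounds of these m inequalities, the product of the x(tau_i(t))
  cancels and the quantity in the hypothesis is at most 1/m^m for all large t,
  contradicting the Limsup condition.\<close>

lemma geometric_mean_bound_of_subinvariant_vector:
  fixes A :: "'a \<Rightarrow> 'a \<Rightarrow> real" and y :: "'a \<Rightarrow> real"
  assumes I: "finite I" "I \<noteq> {}"
    and A_nonneg: "\<And>i j. i \<in> I \<Longrightarrow> j \<in> I \<Longrightarrow> A i j \<ge> 0"
    and y_pos: "\<And>i. i \<in> I \<Longrightarrow> y i > 0"
    and subinv: "\<And>j. j \<in> I \<Longrightarrow> (\<Sum>i\<in>I. A i j * y i) \<le> y j"
  shows "(\<Prod>j\<in>I. (\<Prod>i\<in>I. A i j) powr (1 / card I)) \<le> 1 / real (card I) ^ card I"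
proof -
  define n where "n = real (card I)"
  define Y where "Y = (\<Prod>i\<in>I. y i)"
  have n_pos: "n > 0" using I unfolding n_def by (simp add: card_gt_0_iff)
  have Y_pos: "Y > 0" unfolding Y_def by (rule prod_pos) (use y_pos in auto)
  have column: "(\<Prod>i\<in>I. A i j) powr (1 / n) * Y powr (1 / n) \<le> y j / n" if j: "j \<in> I" for j
  proof -
    have "(\<Prod>i\<in>I. A i j) powr (1 / n) * Y powr (1 / n) = ((\<Prod>i\<in>I. A i j) * Y) powr (1 / n)"
      by (rule powr_mult[symmetric])
    also have "(\<Prod>i\<in>I. A i j) * Y = (\<Prod>i\<in>I. A i j * y i)"
      by (simp add: Y_def prod.distrib)
    also have "(\<Prod>i\<in>I. A i j * y i) powr (1 / n) \<le> (\<Sum>i\<in>I. A i j * y i / n)"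
      unfolding n_def
    proof (rule arith_geom_mean)
      show "A i j * y i \<ge> 0" if "i \<in> I" for i
        using A_nonneg[OF that j] y_pos[OF that] by simp
    qed (use I in auto)
    also have "\<dots> = (\<Sum>i\<in>I. A i j * y i) / n" by (simp add: sum_divide_distrib)
    also have "\<dots> \<le> y j / n" using subinv[OF j] n_pos by (simp add: divide_right_mono)
    finally show ?thesis .
  qed
  have "(Y powr (1 / n)) ^ card I = Y"
    using Y_pos n_pos by (simp add: n_def powr_realpow[symmetric] powr_powr)
  then have "(\<Prod>j\<in>I. (\<Prod>i\<in>I. A i j) powr (1 / n)) * Y
        = (\<Prod>j\<in>I. (\<Prod>i\<in>I. A i j) powr (1 / n) * Y powr (1 / n))"
    by (simp add: prod.distrib)
  also have "\<dots> \<le> (\<Prod>j\<in>I. y j / n)"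
    by (rule prod_mono) (use column Y_pos in auto)
  also have "\<dots> = (1 / n ^ card I) * Y" by (simp add: Y_def n_def prod_dividef)
  finally show ?thesis using Y_pos unfolding n_def by (rule mult_right_le_imp_le)
qed

lemma continuous_nonvanishing_constant_sign:
  fixes x :: "real \<Rightarrow> real"
  assumes cont: "continuous_on {T..} x" and nonzero: "\<And>t. t \<ge> T \<Longrightarrow> x t \<noteq> 0"
  shows "(\<forall>t\<ge>T. x t > 0) \<or> (\<forall>t\<ge>T. x t < 0)"
proof (rule ccontr)
  assume "\<not> ?thesis"
  then obtain a b where "a \<ge> T" "b \<ge> T" "x a < 0" "x b > 0"
    using nonzero by (auto simp: not_less order_le_less)
  moreover have "connected (x ` {T..})"
    using cont by (rule connected_continuous_image) simp
  ultimately have "0 \<in> x ` {T..}"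
    using connected_contains_Icc[of "x ` {T..}" "x a" "x b"] by fastforce
  then show False using nonzero by auto
qed

text \<open>At tau_(-1)(T0) the derivative of a solution is only one-sided; one unit later it
  is a two-sided derivative.\<close>

lemma is_solution_imp_eventual_equation:
  assumes "is_solution t0 m p \<tau> x"
  obtains T x' where "T \<ge> t0"
    and "\<And>t. t \<ge> T \<Longrightarrow> (x has_real_derivative x' t) (at t) \<and>
                         x' t + (\<Sum>i\<in>{1..m}. p i t * x (\<tau> i t)) = 0"
proof -
  from assms obtain T0 x' where "T0 \<ge> t0"
    and eq: "\<And>t. t \<ge> delay_inv t0 m \<tau> T0 \<Longrightarrow>
            (x has_real_derivative x' t) (at t within {delay_inv t0 m \<tau> T0..}) \<and>
            x' t + (\<Sum>i\<in>{1..m}. p i t * x (\<tau> i t)) = 0"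
    unfolding is_solution_def by blast
  define T where "T = max t0 (delay_inv t0 m \<tau> T0 + 1)"
  have "(x has_real_derivative x' t) (at t) \<and> x' t + (\<Sum>i\<in>{1..m}. p i t * x (\<tau> i t)) = 0"
    if "t \<ge> T" for t
  proof -
    have "at t within {delay_inv t0 m \<tau> T0..} = at t"
      by (rule at_within_interior) (use that in \<open>simp add: T_def\<close>)
    then show ?thesis using eq[of t] that by (simp add: T_def)
  qed
  then show thesis using that[of T x'] by (simp add: T_def)
qed

locale delay_equation =
  fixes t0 :: real and m :: nat and p \<tau> :: "nat \<Rightarrow> real \<Rightarrow> real"
  assumes p_cont: "\<And>i. i \<in> {1..m} \<Longrightarrow> continuous_on {t0..} (p i)"
    and p_nonneg: "\<And>i t. i \<in> {1..m} \<Longrightarrow> t \<ge> t0 \<Longrightarrow> p i t \<ge> 0"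
    and tau_le: "\<And>i t. i \<in> {1..m} \<Longrightarrow> t \<ge> t0 \<Longrightarrow> \<tau> i t \<le> t"
    and tau_lim: "\<And>i. i \<in> {1..m} \<Longrightarrow> filterlim (\<tau> i) at_top at_top"
    and tau_mono: "\<And>i. i \<in> {1..m} \<Longrightarrow> mono_on {t0..} (\<tau> i)"
begin

lemma eventually_delays_ge: "\<forall>\<^sub>F t in at_top. \<forall>i\<in>{1..m}. \<tau> i t \<ge> S"
  by (rule eventually_ball_finite) (use tau_lim in \<open>auto simp: filterlim_at_top\<close>)

lemma coefficient_integrable: "i \<in> {1..m} \<Longrightarrow> a \<ge> t0 \<Longrightarrow> p i integrable_on {a..b}"
  by (rule integrable_continuous_interval, rule continuous_on_subset[OF p_cont]) auto

lemma coefficient_integral_nonneg: "i \<in> {1..m} \<Longrightarrow> a \<ge> t0 \<Longrightarrow> integral {a..b} (p i) \<ge> 0"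
  by (rule integral_nonneg[OF coefficient_integrable]) (auto intro: p_nonneg)

context
  fixes x x' :: "real \<Rightarrow> real" and T :: real
  assumes T_ge: "T \<ge> t0"
    and deriv: "\<And>t. t \<ge> T \<Longrightarrow> (x has_real_derivative x' t) (at t)"
    and equation: "\<And>t. t \<ge> T \<Longrightarrow> x' t + (\<Sum>i\<in>{1..m}. p i t * x (\<tau> i t)) = 0"
    and positive: "\<And>t. t \<ge> T \<Longrightarrow> x t > 0"
begin

lemma positive_solution_eventually_antitone: "\<forall>\<^sub>F a in at_top. \<forall>b\<ge>a. x b \<le> x a"
proof -
  obtain N where N: "\<forall>t\<ge>N. \<forall>i\<in>{1..m}. \<tau> i t \<ge> T"
    using eventually_delays_ge[of T] unfolding eventually_at_top_linorder by blast
  define T' where "T' = max N T"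
  have x'_nonpos: "x' t \<le> 0" if "t \<ge> T'" for t
  proof -
    have "(\<Sum>i\<in>{1..m}. p i t * x (\<tau> i t)) \<ge> 0"
      using that T_ge N positive p_nonneg
      by (intro sum_nonneg mult_nonneg_nonneg) (auto simp: T'_def intro: less_imp_le)
    then show ?thesis using equation[of t] that by (simp add: T'_def)
  qed
  have "x b \<le> x a" if "T' \<le> a" "a \<le> b" for a b
  proof (rule DERIV_nonpos_imp_nonincreasing[OF \<open>a \<le> b\<close>])
    fix s assume "a \<le> s" "s \<le> b"
    then show "\<exists>y. (x has_real_derivative y) (at s) \<and> y \<le> 0"
      using that deriv x'_nonpos by (metis T'_def max.bounded_iff order_trans)
  qed
  then show ?thesis unfolding eventually_at_top_linorder by blast
qed

lemma integrated_equation_frozen_delays: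
  assumes "T \<le> a" "a \<le> t"
    and frozen: "\<And>i s. i \<in> {1..m} \<Longrightarrow> s \<in> {a..t} \<Longrightarrow> x (\<tau> i t) \<le> x (\<tau> i s)"
  shows "(\<Sum>i\<in>{1..m}. integral {a..t} (p i) * x (\<tau> i t)) \<le> x a - x t"
proof -
  have "(x has_real_derivative x' s) (at s within {a..t})" if "s \<in> {a..t}" for s
    using that assms by (intro has_field_derivative_at_within[OF deriv]) auto
  then have "(x' has_integral (x t - x a)) {a..t}"
    by (intro fundamental_theorem_of_calculus[OF \<open>a \<le> t\<close>])
       (simp add: has_real_derivative_iff_has_vector_derivative)
  from has_integral_neg[OF this]
  have neg_deriv: "((\<lambda>s. - x' s) has_integral (x a - x t)) {a..t}" by simp
  have frozen_integral: "((\<lambda>s. \<Sum>i\<in>{1..m}. p i s * x (\<tau> i t)) has_integral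
                 (\<Sum>i\<in>{1..m}. integral {a..t} (p i) * x (\<tau> i t))) {a..t}"
    using assms T_ge
    by (intro has_integral_sum has_integral_mult_left integrable_integral
              coefficient_integrable) auto
  have "(\<Sum>i\<in>{1..m}. p i s * x (\<tau> i t)) \<le> - x' s" if s: "s \<in> {a..t}" for s
  proof -
    have "(\<Sum>i\<in>{1..m}. p i s * x (\<tau> i t)) \<le> (\<Sum>i\<in>{1..m}. p i s * x (\<tau> i s))"
      using p_nonneg frozen s assms T_ge by (intro sum_mono mult_left_mono) auto
    also have "\<dots> = - x' s" using equation[of s] s assms by simp
    finally show ?thesis .
  qed
  with frozen_integral neg_deriv show ?thesis by (rule has_integral_le)
qed

text \<open>For s in [tau_j(t), t] we have tau_i(s) \<le> tau_i(t), so once x is nonincreasing the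
  delayed values may be frozen at time t.\<close>

lemma positive_solution_integral_inequality:
  "\<forall>\<^sub>F t in at_top. \<forall>j\<in>{1..m}.
     (\<Sum>i\<in>{1..m}. integral {\<tau> j t..t} (p i) * x (\<tau> i t)) \<le> x (\<tau> j t)"
proof -
  obtain N0 where anti0: "\<forall>a\<ge>N0. \<forall>b\<ge>a. x b \<le> x a"
    using positive_solution_eventually_antitone unfolding eventually_at_top_linorder by blast
  define T' where "T' = max N0 T"
  have anti: "x b \<le> x a" if "T' \<le> a" "a \<le> b" for a b
    using anti0 that by (simp add: T'_def)
  obtain N where N: "\<forall>s\<ge>N. \<forall>i\<in>{1..m}. \<tau> i s \<ge> T'"
    using eventually_delays_ge[of T'] unfolding eventually_at_top_linorder by blast
  define T'' where "T'' = max N T'"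
  have T'': "T'' \<ge> T'" "T'' \<ge> N" "T' \<ge> T" by (simp_all add: T''_def T'_def)
  have ineq: "(\<Sum>i\<in>{1..m}. integral {\<tau> j t..t} (p i) * x (\<tau> i t)) \<le> x (\<tau> j t)"
    if t: "t \<ge> T''" and delays: "\<forall>i\<in>{1..m}. \<tau> i t \<ge> T''" and j: "j \<in> {1..m}" for t j
  proof -
    define a where "a = \<tau> j t"
    have a: "a \<ge> T''" "a \<le> t" using t delays j T'' T_ge tau_le[OF j, of t]
      by (auto simp: a_def)
    have "x (\<tau> i t) \<le> x (\<tau> i s)" if i: "i \<in> {1..m}" and s: "s \<in> {a..t}" for i s
    proof (rule anti)
      show "\<tau> i s \<le> \<tau> i t"
        using mono_onD[OF tau_mono[OF i], of s t] s a T'' T_ge by auto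
      show "\<tau> i s \<ge> T'" using N i s a T'' by auto
    qed
    then have "(\<Sum>i\<in>{1..m}. integral {a..t} (p i) * x (\<tau> i t)) \<le> x a - x t"
      using a T'' by (intro integrated_equation_frozen_delays) auto
    then show ?thesis using positive[of t] a T'' by (simp add: a_def)
  qed
  show ?thesis
    using eventually_conj[OF eventually_ge_at_top[of T''] eventually_delays_ge[of T'']]
    by (rule eventually_mono) (use ineq in blast)
qed

lemma positive_solution_product_bound:
  assumes "m \<ge> 1"
  shows "\<forall>\<^sub>F t in at_top.
    (\<Prod>j\<in>{1..m}. (\<Prod>i\<in>{1..m}. integral {\<tau> j t..t} (p i)) powr (1 / real m)) \<le> 1 / real m ^ m"
  using positive_solution_integral_inequality eventually_delays_ge[of T]
proof eventually_elim
  case (elim t)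
  have "(\<Prod>j\<in>{1..m}. (\<Prod>i\<in>{1..m}. integral {\<tau> j t..t} (p i)) powr (1 / card {1..m}))
        \<le> 1 / real (card {1..m}) ^ card {1..m}"
  proof (rule geometric_mean_bound_of_subinvariant_vector[where y = "\<lambda>i. x (\<tau> i t)"])
    show "finite {1..m}" "{1..m} \<noteq> {}" using assms by auto
    show "integral {\<tau> j t..t} (p i) \<ge> 0" if "i \<in> {1..m}" "j \<in> {1..m}" for i j
    proof (rule coefficient_integral_nonneg[OF that(1)])
      show "\<tau> j t \<ge> t0" using bspec[OF elim(2) that(2)] T_ge by linarith
    qed
    show "x (\<tau> i t) > 0" if "i \<in> {1..m}" for i
      using positive that elim(2) by blast
    show "(\<Sum>i\<in>{1..m}. integral {\<tau> j t..t} (p i) * x (\<tau> i t)) \<le> x (\<tau> j t)"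
      if "j \<in> {1..m}" for j
      using elim(1) that by blast
  qed
  then show ?case by simp
qed

end

lemma nonoscillatory_solution_product_bound:
  assumes "m \<ge> 1" and "is_solution t0 m p \<tau> x" and "\<not> oscillatory x"
  shows "\<forall>\<^sub>F t in at_top.
    (\<Prod>j\<in>{1..m}. (\<Prod>i\<in>{1..m}. integral {\<tau> j t..t} (p i)) powr (1 / real m)) \<le> 1 / real m ^ m"
proof -
  obtain T1 x' where T1: "T1 \<ge> t0"
    and deriv: "\<And>t. t \<ge> T1 \<Longrightarrow> (x has_real_derivative x' t) (at t)"
    and equation: "\<And>t. t \<ge> T1 \<Longrightarrow> x' t + (\<Sum>i\<in>{1..m}. p i t * x (\<tau> i t)) = 0"
    using assms(2) by (rule is_solution_imp_eventual_equation) blast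
  obtain T2 where nonzero: "\<And>t. t \<ge> T2 \<Longrightarrow> x t \<noteq> 0"
    using assms(3) unfolding oscillatory_def by (meson not_le less_imp_le)
  define T where "T = max T1 T2"
  have "continuous_on {T..} x"
    using deriv DERIV_isCont by (intro continuous_at_imp_continuous_on) (force simp: T_def)
  then consider "\<forall>t\<ge>T. x t > 0" | "\<forall>t\<ge>T. x t < 0"
    using continuous_nonvanishing_constant_sign nonzero by (fastforce simp: T_def)
  then show ?thesis
  proof cases
    case 1
    then show ?thesis
      using positive_solution_product_bound[of T x x'] assms(1) T1 deriv equation
      by (simp add: T_def)
  next
    case 2
    show ?thesis
    proof (rule positive_solution_product_bound[where x = "\<lambda>t. - x t" and x' = "\<lambda>t. - x' t"])
      fix t assume t: "t \<ge> T"
      then show "((\<lambda>t. - x t) has_real_derivative - x' t) (at t)"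
        using deriv by (auto simp: T_def intro: DERIV_minus)
      show "- x' t + (\<Sum>i\<in>{1..m}. p i t * - x (\<tau> i t)) = 0"
        using equation[of t] t by (simp add: T_def sum_negf)
      show "- x t > 0" using 2 t by simp
    qed (use T1 assms(1) in \<open>simp_all add: T_def\<close>)
  qed
qed

end

theorem corollary3p3:
  fixes t0 :: real and m :: nat
    and p \<tau> :: "nat \<Rightarrow> real \<Rightarrow> real"
  assumes m_pos: "m \<ge> 1"
    and p_cont: "\<And>i. i \<in> {1..m} \<Longrightarrow> continuous_on {t0..} (p i)"
    and tau_cont: "\<And>i. i \<in> {1..m} \<Longrightarrow> continuous_on {t0..} (\<tau> i)"
    and p_nonneg: "\<And>i t. i \<in> {1..m} \<Longrightarrow> t \<ge> t0 \<Longrightarrow> p i t \<ge> 0"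
    and tau_nonneg: "\<And>i t. i \<in> {1..m} \<Longrightarrow> t \<ge> t0 \<Longrightarrow> \<tau> i t \<ge> 0"
    and tau_le: "\<And>i t. i \<in> {1..m} \<Longrightarrow> t \<ge> t0 \<Longrightarrow> \<tau> i t \<le> t"
    and tau_lim: "\<And>i. i \<in> {1..m} \<Longrightarrow> filterlim (\<tau> i) at_top at_top"
    and tau_mono: "\<And>i. i \<in> {1..m} \<Longrightarrow> mono_on {t0..} (\<tau> i)"
    and cond: "Limsup at_top (\<lambda>t. ereal (\<Prod>j\<in>{1..m}.
                  (\<Prod>i\<in>{1..m}. integral {\<tau> j t..t} (p i)) powr (1 / real m)))
               > ereal (1 / real m ^ m)"
  shows "\<forall>x. is_solution t0 m p \<tau> x \<longrightarrow> oscillatory x"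
proof (intro allI impI)
  fix x assume sol: "is_solution t0 m p \<tau> x"
  interpret delay_equation t0 m p \<tau>
    using p_cont p_nonneg tau_le tau_lim tau_mono by unfold_locales
  show "oscillatory x"
  proof (rule ccontr)
    assume "\<not> oscillatory x"
    from nonoscillatory_solution_product_bound[OF m_pos sol this]
    have "Limsup at_top (\<lambda>t. ereal (\<Prod>j\<in>{1..m}.
            (\<Prod>i\<in>{1..m}. integral {\<tau> j t..t} (p i)) powr (1 / real m)))
          \<le> ereal (1 / real m ^ m)"
      by (rule Limsup_bounded[OF eventually_mono]) simp
    then show False using cond by simp
  qed
qed

end
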